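(* Let $n\geq 3$. The group $S_1\times S_{n-1}$ acts freely and transitively on $C_n$.
   Context: $\overline{\Pi}_n$ is the poset of set partitions of $[n]$ ordered by refinement (finer is smaller), with minimum and maximum removed; $\Delta(\overline{\Pi}_n)$ is its order complex (simplices are nonempty chains), with the natural action of $S_n$ induced from its action on $[n]$. $S_1\times S_{n-1}=\{\sigma\in S_n\mid\sigma(1)=1\}$. $A$ is the set of partitions in $\overline{\Pi}_n$ all of whose blocks not containing $1$ are singletons; $C_n$ is the set of $(n-3)$-dimensional simplices (chains of $n-2$ elements) all of whose vertices lie in $A$. *)

theory Defs
  imports "HOL-Library.Disjoint_Sets" "HOL-Combinatorics.Permutations"
begin

definition set_partitions :: "nat \<Rightarrow> nat set set set" where
  "set_partitions n = {P. partition_on {1..n} P}"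

definition refines :: "nat set set \<Rightarrow> nat set set \<Rightarrow> bool" where
  "refines P Q \<longleftrightarrow> (\<forall>B\<in>P. \<exists>B'\<in>Q. B \<subseteq> B')"

definition Pi_bar :: "nat \<Rightarrow> nat set set set" where
  "Pi_bar n = set_partitions n - {(\<lambda>i. {i}) ` {1..n}, {{1..n}}}"

text \<open>Simplices of the order complex: nonempty (finite) chains.\<close>
definition is_chain :: "nat \<Rightarrow> nat set set set \<Rightarrow> bool" where
  "is_chain n c \<longleftrightarrow> c \<noteq> {} \<and> finite c \<and> c \<subseteq> Pi_bar n \<and>
     (\<forall>P\<in>c. \<forall>Q\<in>c. refines P Q \<or> refines Q P)"

definition A_set :: "nat \<Rightarrow> nat set set set" where
  "A_set n = {P \<in> Pi_bar n. \<forall>B\<in>P. 1 \<notin> B \<longrightarrow> card B = 1}"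

text \<open>C_n: (n-3)-dimensional simplices (chains of n-2 elements) with all vertices in A.\<close>
definition C_set :: "nat \<Rightarrow> nat set set set set" where
  "C_set n = {c. is_chain n c \<and> card c = n - 2 \<and> c \<subseteq> A_set n}"

definition act_part :: "(nat \<Rightarrow> nat) \<Rightarrow> nat set set \<Rightarrow> nat set set" where
  "act_part \<sigma> P = (\<lambda>B. \<sigma> ` B) ` P"

definition act_chain :: "(nat \<Rightarrow> nat) \<Rightarrow> nat set set set \<Rightarrow> nat set set set" where
  "act_chain \<sigma> c = act_part \<sigma> ` c"

text \<open>S_1 x S_{n-1}: permutations of {1..n} fixing 1.\<close>
definition stab1 :: "nat \<Rightarrow> (nat \<Rightarrow> nat) set" where
  "stab1 n = {\<sigma>. \<sigma> permutes {1..n} \<and> \<sigma> 1 = 1}"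

end

theory Submission
  imports Defs
begin

text \<open>A partition in \<open>A\<close> is determined by its block containing 1, and one such partition
refines another iff its block is contained in the other's. A chain of \<open>n - 2\<close> elements of \<open>A\<close>
is therefore a complete flag \<open>{1} \<subset> B\<^sub>2 \<subset> \<dots> \<subset> B\<^sub>n\<^sub>-\<^sub>1 \<subset> [n]\<close> of such blocks, i.e. an
ordering of \<open>{2..n}\<close>: the order in which the elements join the block of 1. A permutation fixing 1
acts on these orderings by composition, and composition with permutations of \<open>{2..n}\<close> acts freely
and transitively on the bijections onto \<open>{2..n}\<close>.\<close>

lemma inj_on_card_chain:
  assumes "\<forall>A\<in>T. finite A" "chain\<^sub>\<subseteq> T"
  shows "inj_on card T"
  using assms unfolding chain_subset_def by (metis card_subset_eq inj_onI)

lemma chain_card_Suc_insert: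
  assumes "chain\<^sub>\<subseteq> T" "A \<in> T" "B \<in> T" "finite A" "card B = Suc (card A)"
  obtains x where "x \<notin> A" "B = insert x A"
proof -
  have "\<not> B \<subseteq> A"
  proof
    assume "B \<subseteq> A"
    then have "card B \<le> card A" by (rule card_mono[OF assms(4)])
    then show False using assms(5) by simp
  qed
  then have "A \<subseteq> B" using assms(1-3) unfolding chain_subset_def by blast
  then have "card (B - A) = 1" using assms(4,5) by (simp add: card_Diff_subset)
  then obtain x where "B - A = {x}" by (rule card_1_singletonE)
  then show ?thesis using that \<open>A \<subseteq> B\<close> by blast
qed

lemma chain_enumeration:
  assumes fin: "\<forall>A\<in>T. finite A" and chain: "chain\<^sub>\<subseteq> T"
    and cards: "card ` T = {..m}"
  obtains f where "inj_on f {..<m}" "T = (\<lambda>k. f ` {..<k}) ` {..m}"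
proof -
  have card_inj: "inj_on card T" using inj_on_card_chain[OF fin chain] .
  define B where "B = the_inv_into T card"
  have B: "B k \<in> T" "card (B k) = k" if "k \<le> m" for k
    using that cards the_inv_into_into[OF card_inj] f_the_inv_into_f[OF card_inj] unfolding B_def by auto
  define f where "f k = (SOME x. x \<notin> B k \<and> B (Suc k) = insert x (B k))" for k
  have f: "f k \<notin> B k \<and> B (Suc k) = insert (f k) (B k)" if "k < m" for k
    unfolding f_def
  proof (rule someI_ex)
    have k: "k \<le> m" "Suc k \<le> m" using that by auto
    have "finite (B k)" using fin B(1)[OF k(1)] by blast
    moreover have "card (B (Suc k)) = Suc (card (B k))" using B(2) k by simp
    ultimately obtain x where "x \<notin> B k" "B (Suc k) = insert x (B k)"
      by (rule chain_card_Suc_insert[OF chain B(1)[OF k(1)] B(1)[OF k(2)]])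
    then show "\<exists>x. x \<notin> B k \<and> B (Suc k) = insert x (B k)" by blast
  qed
  have prefix: "B k = f ` {..<k} \<and> inj_on f {..<k}" if "k \<le> m" for k
    using that
  proof (induction k)
    case 0
    have "finite (B 0)" "card (B 0) = 0" using B[of 0] fin by auto
    then show ?case by simp
  next
    case (Suc k)
    then have "k < m" "B k = f ` {..<k}" "inj_on f {..<k}" by auto
    with f[of k] show ?case by (simp add: lessThan_Suc)
  qed
  have "T = B ` {..m}" using the_inv_into_onto[OF card_inj] cards unfolding B_def by simp
  also have "\<dots> = (\<lambda>k. f ` {..<k}) ` {..m}" using prefix by simp
  finally show ?thesis using that prefix by blast
qed

lemma eq_on_lessThan_if_prefix_images_eq:
  fixes k m :: nat
  assumes "inj_on f {..<m}" "\<And>k. k \<le> m \<Longrightarrow> f ` {..<k} = g ` {..<k}" "k < m"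
  shows "f k = g k"
proof -
  have "f k \<in> f ` {..<Suc k}" by simp
  also have "\<dots> = g ` {..<Suc k}" using assms(2,3) by simp
  also have "\<dots> = insert (g k) (f ` {..<k})" using assms(2,3) by (simp add: lessThan_Suc)
  finally have "f k \<in> insert (g k) (f ` {..<k})" .
  moreover have "f k \<notin> f ` {..<k}" using assms(1,3) by (auto dest: inj_onD)
  ultimately show ?thesis by simp
qed

lemma permutes_comp_eq_exists:
  assumes "bij_betw f A B" "bij_betw g A B"
  obtains \<sigma> where "\<sigma> permutes B" "\<forall>x\<in>A. \<sigma> (f x) = g x"
proof
  define \<sigma> where "\<sigma> y = (if y \<in> B then g (inv_into A f y) else y)" for y
  have "bij_betw (g \<circ> inv_into A f) B B"
    using assms by (meson bij_betw_inv_into bij_betw_trans)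
  then have "bij_betw \<sigma> B B" by (rule bij_betw_cong[THEN iffD1, rotated]) (simp add: \<sigma>_def)
  then show "\<sigma> permutes B" by (rule bij_imp_permutes) (simp add: \<sigma>_def)
  show "\<forall>x\<in>A. \<sigma> (f x) = g x"
    using assms(1) by (simp add: \<sigma>_def bij_betw_apply bij_betw_inv_into_left)
qed

definition block_plus_singletons :: "nat \<Rightarrow> nat set \<Rightarrow> nat set set" where
  "block_plus_singletons n B = insert B ((\<lambda>i. {i}) ` ({1..n} - B))"

lemma block_plus_singletons_eq_iff:
  assumes "1 \<in> B" "1 \<in> B'"
  shows "block_plus_singletons n B = block_plus_singletons n B' \<longleftrightarrow> B = B'"
  using assms unfolding block_plus_singletons_def by blast

lemma refines_block_plus_singletons_iff:
  assumes "1 \<in> B" "1 \<in> B'"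
  shows "refines (block_plus_singletons n B) (block_plus_singletons n B') \<longleftrightarrow> B \<subseteq> B'"
  using assms unfolding refines_def block_plus_singletons_def by blast

lemma act_part_block_plus_singletons:
  assumes "\<sigma> permutes {1..n}"
  shows "act_part \<sigma> (block_plus_singletons n B) = block_plus_singletons n (\<sigma> ` B)"
proof -
  have "\<sigma> ` ({1..n} - B) = {1..n} - \<sigma> ` B"
    using assms by (simp add: image_set_diff permutes_inj permutes_image)
  moreover have "act_part \<sigma> (block_plus_singletons n B) =
      insert (\<sigma> ` B) ((\<lambda>i. {i}) ` (\<sigma> ` ({1..n} - B)))"
    unfolding act_part_def block_plus_singletons_def by (simp add: image_image)
  ultimately show ?thesis unfolding block_plus_singletons_def by simp
qed

lemma block_plus_singletons_in_A_set:
  assumes "1 \<in> B" "B \<subseteq> {1..n}" "card B \<in> {2..n-1}"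
  shows "block_plus_singletons n B \<in> A_set n"
proof -
  have "partition_on {1..n} (block_plus_singletons n B)"
    unfolding block_plus_singletons_def
    using assms(1,2) partition_on_singletons[of "{1..n} - B"] by (subst partition_on_insert) (auto simp: disjnt_def)
  moreover have "block_plus_singletons n B \<noteq> (\<lambda>i. {i}) ` {1..n}"
  proof
    assume "block_plus_singletons n B = (\<lambda>i. {i}) ` {1..n}"
    then have "B \<in> (\<lambda>i. {i}) ` {1..n}" unfolding block_plus_singletons_def by blast
    then show False using assms(3) by auto
  qed
  moreover have "block_plus_singletons n B \<noteq> {{1..n}}"
    using assms(3) unfolding block_plus_singletons_def by auto
  moreover have "\<forall>C\<in>block_plus_singletons n B. 1 \<notin> C \<longrightarrow> card C = 1"
    using assms(1) unfolding block_plus_singletons_def by auto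
  ultimately show ?thesis
    unfolding A_set_def Pi_bar_def set_partitions_def by blast
qed

lemma partition_on_eq_block_plus_singletons:
  assumes part: "partition_on {1..n} P" and B: "B \<in> P" "1 \<in> B"
    and singletons: "\<forall>C\<in>P. 1 \<notin> C \<longrightarrow> card C = 1"
  shows "P = block_plus_singletons n B"
proof (intro equalityI subsetI)
  have union: "\<Union>P = {1..n}" and disj: "disjoint P" using part partition_onD1 partition_onD2 by auto
  have block_of: "C = B \<longleftrightarrow> x \<in> B" if "C \<in> P" "x \<in> C" for C x
    using disjointD[OF disj that(1) B(1)] that by blast
  {
    fix C assume C: "C \<in> P"
    show "C \<in> block_plus_singletons n B"
    proof (cases "1 \<in> C")
      case False
      then obtain i where "C = {i}" using singletons C card_1_singletonE by metis
      then show ?thesis using block_of[OF C] C union False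
        unfolding block_plus_singletons_def by auto
    qed (use block_of[OF C] B in \<open>auto simp: block_plus_singletons_def\<close>)
  next
    fix C assume "C \<in> block_plus_singletons n B"
    then consider "C = B" | i where "i \<in> {1..n} - B" "C = {i}"
      unfolding block_plus_singletons_def by auto
    then show "C \<in> P"
    proof cases
      case 2
      then have "i \<in> \<Union>P" using union by simp
      then obtain D where D: "D \<in> P" "i \<in> D" by blast
      then have "1 \<notin> D" using block_of 2 B by blast
      then have "D = {i}" using singletons D by (metis card_1_singletonE singletonD)
      then show ?thesis using D 2 by simp
    qed (use B in simp)
  }
qed

lemma A_set_obtain_block:
  assumes "P \<in> A_set n" "n \<ge> 1"
  obtains B where "1 \<in> B" "B \<subseteq> {1..n}" "card B \<in> {2..n-1}" "P = block_plus_singletons n B"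
proof -
  have part: "partition_on {1..n} P" and not_min: "P \<noteq> (\<lambda>i. {i}) ` {1..n}"
    and not_max: "P \<noteq> {{1..n}}" and singletons: "\<forall>C\<in>P. 1 \<notin> C \<longrightarrow> card C = 1"
    using assms(1) unfolding A_set_def Pi_bar_def set_partitions_def by auto
  have "1 \<in> \<Union>P" using partition_onD1[OF part] assms(2) by (metis atLeastAtMost_iff order_refl)
  then obtain B where B: "B \<in> P" "1 \<in> B" by blast
  have P: "P = block_plus_singletons n B"
    using partition_on_eq_block_plus_singletons[OF part B singletons] .
  have "B \<subseteq> {1..n}" using partition_onD1[OF part] B by auto
  moreover have "B \<noteq> {1..n}" using not_max P unfolding block_plus_singletons_def by auto
  moreover have "B \<noteq> {1}"
  proof
    assume "B = {1}"
    then have "P = insert {1} ((\<lambda>i. {i}) ` ({1..n} - {1}))"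
      using P unfolding block_plus_singletons_def by simp
    also have "\<dots> = (\<lambda>i. {i}) ` {1..n}" using assms(2) by auto
    finally show False using not_min by simp
  qed
  moreover have "card B \<in> {2..n-1}"
  proof -
    have fin: "finite B" using \<open>B \<subseteq> {1..n}\<close> finite_subset by blast
    have "card B < n"
      using \<open>B \<subseteq> {1..n}\<close> \<open>B \<noteq> {1..n}\<close> psubset_card_mono[of "{1..n}" B] by auto
    moreover obtain x where "x \<in> B" "x \<noteq> 1" using \<open>B \<noteq> {1}\<close> B(2) by blast
    then have "card {1, x} \<le> card B" using B(2) fin by (intro card_mono) auto
    ultimately show ?thesis using \<open>x \<noteq> 1\<close> by simp
  qed
  ultimately show ?thesis using that B(2) P by blast
qed

lemma stab1_eq: "stab1 n = {\<sigma>. \<sigma> permutes {2..n}}"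
proof (intro set_eqI iffI; simp)
  fix \<sigma> assume "\<sigma> \<in> stab1 n"
  then have perm: "\<sigma> permutes {1..n}" and fix1: "\<sigma> 1 = 1" unfolding stab1_def by auto
  show "\<sigma> permutes {2..n}"
  proof (rule permutes_superset[OF perm])
    fix x assume "x \<in> {1..n} - {2..n}"
    then have "x = 1" by auto
    then show "\<sigma> x = x" using fix1 by simp
  qed
next
  fix \<sigma> assume "\<sigma> permutes {2..n}"
  then show "\<sigma> \<in> stab1 n" unfolding stab1_def by (auto intro: permutes_subset permutes_not_in)
qed

definition enum_flag :: "nat \<Rightarrow> (nat \<Rightarrow> nat) \<Rightarrow> nat set set" where
  "enum_flag n f = (\<lambda>k. insert 1 (f ` {..<k})) ` {1..n-2}"

lemma enum_flag_block:
  assumes "bij_betw f {..<n-1} {2..n}" "k \<le> n-1" "n \<ge> 1"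
  shows "insert 1 (f ` {..<k}) \<subseteq> {1..n}" "card (insert 1 (f ` {..<k})) = Suc k"
proof -
  have "f ` {..<k} \<subseteq> {2..n}" using assms bij_betw_imp_surj_on by fastforce
  moreover have "inj_on f {..<k}"
    using bij_betw_imp_inj_on[OF assms(1)] by (rule inj_on_subset) (use assms(2) in auto)
  then have "card (f ` {..<k}) = k" by (simp add: card_image)
  ultimately show "insert 1 (f ` {..<k}) \<subseteq> {1..n}" "card (insert 1 (f ` {..<k})) = Suc k"
    using assms(3) by (auto simp: finite_subset card_insert_if)
qed

lemma enum_flag_cong: "(\<And>k. k < n - 2 \<Longrightarrow> f k = g k) \<Longrightarrow> enum_flag n f = enum_flag n g"
  unfolding enum_flag_def by (intro image_cong refl arg_cong[where f = "insert 1"]) auto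

lemma flag_enumeration:
  assumes n: "n \<ge> 3" and chain: "chain\<^sub>\<subseteq> S" and blocks: "\<forall>B\<in>S. 1 \<in> B \<and> B \<subseteq> {1..n}"
    and cards: "card ` S = {2..n-1}"
  obtains f where "bij_betw f {..<n-1} {2..n}" "S = enum_flag n f"
proof -
  define S' where "S' = (\<lambda>B. B - {1}) ` S"
  \<comment> \<open>Adding the bottom and top of the flag makes the cardinalities exactly \<open>{..n-1}\<close>.\<close>
  define T where "T = insert {} (insert {2..n} S')"
  have "{1..n} - {1} = {2..n}" by auto
  then have S'_sub: "\<forall>A\<in>S'. A \<subseteq> {2..n}" using blocks unfolding S'_def by blast
  have fin: "\<forall>A\<in>T. finite A" using S'_sub unfolding T_def by (auto intro: finite_subset)
  have "chain\<^sub>\<subseteq> S'" using chain unfolding S'_def chain_subset_def by blast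
  then have T_chain: "chain\<^sub>\<subseteq> T" using S'_sub unfolding T_def chain_subset_def by blast
  have "card ` S' = (\<lambda>k. k - 1) ` card ` S"
    unfolding S'_def image_image using blocks by (intro image_cong) (auto simp: card_Diff_singleton finite_subset)
  also have "\<dots> = {1..n-2}"
  proof -
    have "{2..n-1} = Suc ` {1..n-2}" using n by (simp; arith)
    then show ?thesis unfolding cards by (simp only: image_image diff_Suc_1 image_ident)
  qed
  finally have S'_cards: "card ` S' = {1..n-2}" .
  have "card ` T = insert 0 (insert (n-1) {1..n-2})" using S'_cards unfolding T_def by simp
  also have "\<dots> = {..n-1}" using n by auto
  finally obtain f where inj: "inj_on f {..<n-1}" and T: "T = (\<lambda>k. f ` {..<k}) ` {..n-1}"
    by (rule chain_enumeration[OF fin T_chain])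
  have "f ` {..<n-1} \<in> T" unfolding T by auto
  moreover have "{2..n} \<in> T" unfolding T_def by simp
  moreover have "card (f ` {..<n-1}) = card {2..n}" using card_image[OF inj] by simp
  ultimately have "f ` {..<n-1} = {2..n}" using inj_onD[OF inj_on_card_chain[OF fin T_chain]] by blast
  then have bij: "bij_betw f {..<n-1} {2..n}" using inj by (simp add: bij_betw_def)
  have S'_eq: "S' = (\<lambda>k. f ` {..<k}) ` {1..n-2}"
  proof -
    have card_prefix: "card (f ` {..<k}) = k" if "k \<le> n-1" for k
      using inj that by (simp add: card_image inj_on_subset)
    have "card A \<in> {1..n-2}" if "A \<in> S'" for A using S'_cards that by blast
    then have "S' = {A \<in> T. card A \<in> {1..n-2}}" using n unfolding T_def by auto
    also have "\<dots> = (\<lambda>k. f ` {..<k}) ` {1..n-2}" unfolding T using card_prefix by auto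
    finally show ?thesis .
  qed
  have "enum_flag n f = insert 1 ` S'" unfolding enum_flag_def S'_eq image_image ..
  also have "\<dots> = (\<lambda>B. B) ` S"
    unfolding S'_def image_image using blocks by (intro image_cong) (auto simp: insert_absorb)
  finally show ?thesis using that[OF bij] by simp
qed

lemma enum_chain_eq_iff:
  "block_plus_singletons n ` enum_flag n f = block_plus_singletons n ` enum_flag n g \<longleftrightarrow>
    enum_flag n f = enum_flag n g"
proof (rule inj_on_image_eq_iff)
  show "inj_on (block_plus_singletons n) {B. 1 \<in> B}"
    by (rule inj_onI) (simp add: block_plus_singletons_eq_iff)
qed (auto simp: enum_flag_def)

lemma enum_flag_eq_imp_eq:
  assumes f: "bij_betw f {..<n-1} {2..n}" and g: "bij_betw g {..<n-1} {2..n}" and "n \<ge> 1"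
    and eq: "enum_flag n f = enum_flag n g" and "k < n - 1"
  shows "f k = g k"
proof (rule eq_on_lessThan_if_prefix_images_eq[OF bij_betw_imp_inj_on[OF f] _ \<open>k < n - 1\<close>])
  fix j assume j: "j \<le> n - 1"
  consider "j = 0" | "j = n - 1" | "j \<in> {1..n-2}" using j by fastforce
  then show "f ` {..<j} = g ` {..<j}"
  proof cases
    case 2
    then show ?thesis using f g by (simp add: bij_betw_def)
  next
    case 3
    then have "insert 1 (f ` {..<j}) \<in> enum_flag n g" using eq unfolding enum_flag_def by blast
    then obtain i where i: "i \<in> {1..n-2}" "insert 1 (f ` {..<j}) = insert 1 (g ` {..<i})"
      unfolding enum_flag_def by blast
    have "i \<le> n - 1" using i(1) by (simp; arith)
    then have "i = j" using arg_cong[OF i(2), of card] enum_flag_block(2)[OF f j] enum_flag_block(2)[OF g]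
        \<open>n \<ge> 1\<close> by simp
    moreover have "f ` {..<j} \<subseteq> {2..n}" "g ` {..<j} \<subseteq> {2..n}"
      using j image_mono[of "{..<j}" "{..<n-1}"] f g by (auto simp: bij_betw_def)
    then have "1 \<notin> f ` {..<j}" "1 \<notin> g ` {..<j}" by auto
    ultimately show ?thesis using i(2) by (metis insert_ident)
  qed simp
qed

lemma C_set_obtain_flag:
  assumes n: "n \<ge> 3" and c: "c \<in> C_set n"
  obtains S where "chain\<^sub>\<subseteq> S" "\<forall>B\<in>S. 1 \<in> B \<and> B \<subseteq> {1..n}" "card ` S = {2..n-1}"
    "c = block_plus_singletons n ` S"
proof -
  have fin: "finite c" and chain: "\<forall>P\<in>c. \<forall>Q\<in>c. refines P Q \<or> refines Q P"
    and card_c: "card c = n - 2" and c_A: "c \<subseteq> A_set n"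
    using c unfolding C_set_def is_chain_def by auto
  define S where "S = {B. 1 \<in> B \<and> B \<subseteq> {1..n} \<and> card B \<in> {2..n-1} \<and> block_plus_singletons n B \<in> c}"
  have c_eq: "c = block_plus_singletons n ` S"
  proof (intro equalityI subsetI)
    fix P assume "P \<in> c"
    moreover obtain B where "1 \<in> B" "B \<subseteq> {1..n}" "card B \<in> {2..n-1}" "P = block_plus_singletons n B"
      using A_set_obtain_block[of P n] c_A \<open>P \<in> c\<close> n by auto
    ultimately show "P \<in> block_plus_singletons n ` S" unfolding S_def by blast
  qed (auto simp: S_def)
  have inj: "inj_on (block_plus_singletons n) S"
    by (rule inj_onI) (simp add: S_def block_plus_singletons_eq_iff)
  have S_chain: "chain\<^sub>\<subseteq> S"
    using chain unfolding chain_subset_def c_eq by (auto simp: S_def refines_block_plus_singletons_iff)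
  have fin_blocks: "\<forall>B\<in>S. finite B" unfolding S_def by (auto intro: finite_subset)
  have "card (card ` S) = n - 2"
    using card_c card_image[OF inj] card_image[OF inj_on_card_chain[OF fin_blocks S_chain]]
    unfolding c_eq by simp
  moreover have "card ` S \<subseteq> {2..n-1}" unfolding S_def by auto
  ultimately have "card ` S = {2..n-1}" using n by (intro card_subset_eq) auto
  then show ?thesis using that S_chain c_eq unfolding S_def by auto
qed

lemma enum_chain_in_C_set:
  assumes n: "n \<ge> 3" and f: "bij_betw f {..<n-1} {2..n}"
  shows "block_plus_singletons n ` enum_flag n f \<in> C_set n"
proof -
  let ?block = "\<lambda>k. insert 1 (f ` {..<k})"
  have le: "k \<le> n - 1" if "k \<in> {1..n-2}" for k using that by (simp; arith)
  have in_A: "block_plus_singletons n (?block k) \<in> A_set n" if "k \<in> {1..n-2}" for k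
  proof (rule block_plus_singletons_in_A_set)
    from le[OF that] show "?block k \<subseteq> {1..n}" "card (?block k) \<in> {2..n-1}"
      using enum_flag_block[OF f] that n by auto
  qed simp
  have "refines (block_plus_singletons n (?block k)) (block_plus_singletons n (?block l))"
    if "k \<le> l" for k l
    using that by (subst refines_block_plus_singletons_iff) auto
  then have chain: "\<forall>P\<in>block_plus_singletons n ` enum_flag n f. \<forall>Q\<in>block_plus_singletons n ` enum_flag n f.
      refines P Q \<or> refines Q P"
    unfolding enum_flag_def by (auto intro: le_cases)
  have "inj_on (\<lambda>k. block_plus_singletons n (?block k)) {1..n-2}"
  proof (rule inj_onI)
    fix k l assume "k \<in> {1..n-2}" "l \<in> {1..n-2}"
      and "block_plus_singletons n (?block k) = block_plus_singletons n (?block l)"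
    then have "card (?block k) = card (?block l)" by (simp add: block_plus_singletons_eq_iff)
    then show "k = l" using enum_flag_block(2)[OF f] le \<open>k \<in> {1..n-2}\<close> \<open>l \<in> {1..n-2}\<close> n by simp
  qed
  then have "card (block_plus_singletons n ` enum_flag n f) = n - 2"
    unfolding enum_flag_def image_image by (simp add: card_image)
  moreover have "A_set n \<subseteq> Pi_bar n" unfolding A_set_def by auto
  ultimately show ?thesis
    using in_A chain n unfolding C_set_def is_chain_def enum_flag_def by auto
qed

lemma C_set_obtain_enumeration:
  assumes "n \<ge> 3" "c \<in> C_set n"
  obtains f where "bij_betw f {..<n-1} {2..n}" "c = block_plus_singletons n ` enum_flag n f"
proof -
  obtain S where "chain\<^sub>\<subseteq> S" "\<forall>B\<in>S. 1 \<in> B \<and> B \<subseteq> {1..n}" "card ` S = {2..n-1}"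
    "c = block_plus_singletons n ` S"
    using C_set_obtain_flag[OF assms] .
  with flag_enumeration[OF assms(1)] that show ?thesis by metis
qed

lemma act_chain_enum:
  assumes "\<sigma> permutes {2..n}"
  shows "act_chain \<sigma> (block_plus_singletons n ` enum_flag n f) =
    block_plus_singletons n ` enum_flag n (\<sigma> \<circ> f)"
proof -
  have perm: "\<sigma> permutes {1..n}" using assms by (rule permutes_subset) auto
  have "\<sigma> 1 = 1" using assms by (simp add: permutes_not_in)
  then have "\<sigma> ` insert 1 (f ` X) = insert 1 ((\<sigma> \<circ> f) ` X)" for X by (simp add: image_comp)
  then show ?thesis
    unfolding act_chain_def enum_flag_def image_image act_part_block_plus_singletons[OF perm] by simp
qed

lemma act_chain_in_C_set:
  assumes n: "n \<ge> 3" and \<sigma>: "\<sigma> permutes {2..n}" and c: "c \<in> C_set n"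
  shows "act_chain \<sigma> c \<in> C_set n"
proof -
  obtain f where f: "bij_betw f {..<n-1} {2..n}" and c: "c = block_plus_singletons n ` enum_flag n f"
    using C_set_obtain_enumeration[OF n c] .
  have "bij_betw (\<sigma> \<circ> f) {..<n-1} {2..n}" using f permutes_imp_bij[OF \<sigma>] by (rule bij_betw_trans)
  then show ?thesis unfolding c act_chain_enum[OF \<sigma>] by (rule enum_chain_in_C_set[OF n])
qed

lemma C_set_act_chain_transitive:
  assumes n: "n \<ge> 3" and "c \<in> C_set n" "d \<in> C_set n"
  obtains \<sigma> where "\<sigma> permutes {2..n}" "act_chain \<sigma> c = d"
proof -
  obtain f where f: "bij_betw f {..<n-1} {2..n}" and c: "c = block_plus_singletons n ` enum_flag n f"
    using C_set_obtain_enumeration[OF n \<open>c \<in> C_set n\<close>] .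
  obtain g where g: "bij_betw g {..<n-1} {2..n}" and d: "d = block_plus_singletons n ` enum_flag n g"
    using C_set_obtain_enumeration[OF n \<open>d \<in> C_set n\<close>] .
  obtain \<sigma> where \<sigma>: "\<sigma> permutes {2..n}" and \<sigma>f: "\<forall>x\<in>{..<n-1}. \<sigma> (f x) = g x"
    using permutes_comp_eq_exists[OF f g] .
  have "enum_flag n (\<sigma> \<circ> f) = enum_flag n g" using \<sigma>f by (intro enum_flag_cong) auto
  then have "act_chain \<sigma> c = d" unfolding c d act_chain_enum[OF \<sigma>] by simp
  with \<sigma> show ?thesis by (rule that)
qed

lemma act_chain_fixed_imp_id:
  assumes n: "n \<ge> 3" and \<sigma>: "\<sigma> permutes {2..n}" and c: "c \<in> C_set n"
    and fixed: "act_chain \<sigma> c = c"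
  shows "\<sigma> = id"
proof -
  obtain f where f: "bij_betw f {..<n-1} {2..n}" and c: "c = block_plus_singletons n ` enum_flag n f"
    using C_set_obtain_enumeration[OF n c] .
  have \<sigma>f: "bij_betw (\<sigma> \<circ> f) {..<n-1} {2..n}" using f permutes_imp_bij[OF \<sigma>] by (rule bij_betw_trans)
  have "enum_flag n (\<sigma> \<circ> f) = enum_flag n f"
    using fixed unfolding c act_chain_enum[OF \<sigma>] enum_chain_eq_iff .
  then have "\<sigma> (f k) = f k" if "k < n - 1" for k
    using enum_flag_eq_imp_eq[OF \<sigma>f f _ _ that] n by simp
  moreover have "x \<in> f ` {..<n-1}" if "x \<in> {2..n}" for x using f that by (simp add: bij_betw_def)
  ultimately have "\<sigma> x = x" if "x \<in> {2..n}" for x using that by auto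
  then show "\<sigma> = id" using permutes_not_in[OF \<sigma>] by (metis eq_id_iff)
qed

theorem lemma16:
  fixes n :: nat
  assumes "n \<ge> 3"
  shows "(\<forall>\<sigma>\<in>stab1 n. \<forall>c\<in>C_set n. act_chain \<sigma> c \<in> C_set n)
       \<and> (\<forall>c\<in>C_set n. \<forall>d\<in>C_set n. \<exists>\<sigma>\<in>stab1 n. act_chain \<sigma> c = d)
       \<and> (\<forall>\<sigma>\<in>stab1 n. \<forall>c\<in>C_set n. act_chain \<sigma> c = c \<longrightarrow> \<sigma> = id)"
  unfolding stab1_eq
  using act_chain_in_C_set[OF assms] C_set_act_chain_transitive[OF assms]
    act_chain_fixed_imp_id[OF assms]
  by (metis mem_Collect_eq)

end
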